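(* Let $\alpha,\beta,\gamma,\delta\in\mathbb{C}$ be parameters for which all gamma functions and hypergeometric functions below are well-defined, and let $f(z)=f(\alpha,\beta,\gamma,\delta;z)$ be defined for $z\in\mathbb{C}\setminus\{0\}$ by $$f(\alpha,\beta,\gamma,\delta;z)=\sum_{\nu=0}^{\infty}\frac{z^{-\nu}\Gamma(\alpha+\gamma+\nu)}{\nu!\,\Gamma(\beta+\nu)}\,E\left(\begin{matrix}\alpha+1,&\beta+\nu\\ \delta,&\beta+1+\nu\end{matrix};z\right).$$ Then for all $z\neq 0$, $$-z f'(z)+\beta f(z)=E(\alpha+1;\delta;z)\,E(\alpha+\gamma;\beta;-z).$$
   Context: For complex parameters $a_1,\dots,a_p$, $b_1,\dots,b_q$ with $p\le q$ and $z\in\mathbb{C}\setminus\{0\}$, the MacRobert $E$-function is $$E\left(\begin{matrix}a_1,\dots,a_p\\ b_1,\dots,b_q\end{matrix};z\right)=\frac{\prod_{j=1}^p\Gamma(a_j)}{\prod_{j=1}^q\Gamma(b_j)}\,{}_pF_q\left(\begin{matrix}a_1,\dots,a_p\\ b_1,\dots,b_q\end{matrix};-\frac1z\right),$$ where ${}_pF_q$ is the generalized hypergeometric function. In particular $E(a;b;z)=\frac{\Gamma(a)}{\Gamma(b)}M(a;b;-1/z)$ with $M={}_1F_1$ Kummer's function. *)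

theory Defs
  imports "HOL-Analysis.Analysis"
begin

definition hypF :: "complex list \<Rightarrow> complex list \<Rightarrow> complex \<Rightarrow> complex" where
  "hypF as bs z = (\<Sum>n. (prod_list (map (\<lambda>a. pochhammer a n) as)
                        / prod_list (map (\<lambda>b. pochhammer b n) bs)) * z ^ n / fact n)"

definition MacRobertE :: "complex list \<Rightarrow> complex list \<Rightarrow> complex \<Rightarrow> complex" where
  "MacRobertE as bs z = prod_list (map Gamma as) / prod_list (map Gamma bs)
                        * hypF as bs (- 1 / z)"

definition fE :: "complex \<Rightarrow> complex \<Rightarrow> complex \<Rightarrow> complex \<Rightarrow> complex \<Rightarrow> complex" where
  "fE \<alpha> \<beta> \<gamma> \<delta> z = (\<Sum>\<nu>. z powi (- int \<nu>) * Gamma (\<alpha> + \<gamma> + of_nat \<nu>)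
        / (fact \<nu> * Gamma (\<beta> + of_nat \<nu>))
        * MacRobertE [\<alpha> + 1, \<beta> + of_nat \<nu>] [\<delta>, \<beta> + 1 + of_nat \<nu>] z)"

end

theory Submission
  imports Defs "HOL-Real_Asymp.Real_Asymp"
begin

text \<open>Put \<open>u = 1/z\<close>. Every E-function occurring here is a power series in \<open>u\<close>, and
  \<open>E(\<alpha>+1, \<beta>+\<nu>; \<delta>, \<beta>+1+\<nu>; z)\<close> is the series of \<open>E(\<alpha>+1; \<delta>; z)\<close> with its \<open>k\<close>-th coefficient
  divided by \<open>\<beta>+\<nu>+k\<close>. Summing the absolutely convergent double series for \<open>f\<close> along
  diagonals therefore gives \<open>f(z) = \<Sum> a\<^sub>n u\<^sup>n\<close>, where \<open>(\<beta>+n) a\<^sub>n\<close> is the \<open>n\<close>-th coefficient of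
  the Cauchy product of \<open>E(\<alpha>+\<gamma>; \<beta>; -z)\<close> and \<open>E(\<alpha>+1; \<delta>; z)\<close>. Since \<open>-z d/dz = u d/du\<close>
  multiplies the \<open>n\<close>-th coefficient by \<open>n\<close>, the operator \<open>-z d/dz + \<beta>\<close> multiplies it by
  \<open>\<beta>+n\<close> and turns \<open>f\<close> into that product.\<close>

lemma summable_norm_powser_ratio_recurrence:
  fixes t :: "nat \<Rightarrow> complex" and a b x :: complex
  assumes rec: "\<And>n. t (Suc n) * ((b + of_nat n) * of_nat (Suc n)) = (a + of_nat n) * t n"
  shows "summable (\<lambda>n. norm (t n * x ^ n))"
proof -
  have "((\<lambda>n. (norm a + real n) * norm x / ((real n - norm b) * (real n + 1))) \<longlongrightarrow> 0) sequentially"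
    by real_asymp
  moreover have "eventually (\<lambda>n. real n > norm b) sequentially"
    by real_asymp
  ultimately have "eventually (\<lambda>n. (norm a + real n) * norm x / ((real n - norm b) * (real n + 1)) < 1/2
      \<and> real n > norm b) sequentially"
    by (intro eventually_conj order_tendstoD(2)) auto
  then obtain N where N: "\<And>n. n \<ge> N \<Longrightarrow> (norm a + real n) * norm x / ((real n - norm b) * (real n + 1)) < 1/2
      \<and> real n > norm b"
    unfolding eventually_sequentially by blast
  show ?thesis
  proof (rule summable_ratio_test[of "1/2" N])
    fix n assume "n \<ge> N"
    then have ratio: "(norm a + real n) * norm x / ((real n - norm b) * (real n + 1)) < 1/2"
      and large: "real n > norm b" using N by blast+
    have "real n - norm b \<le> norm (b + of_nat n)"
      using norm_diff_ineq[of "of_nat n" b] by (simp add: add.commute)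
    then have "norm (t (Suc n)) * ((real n - norm b) * (real n + 1))
        \<le> norm (t (Suc n)) * (norm (b + of_nat n) * (real n + 1))"
      using large by (intro mult_left_mono mult_right_mono) auto
    also have "\<dots> = norm (a + of_nat n) * norm (t n)"
      using arg_cong[OF rec[of n], of norm] unfolding norm_mult norm_of_nat by (simp add: add.commute)
    also have "\<dots> \<le> (norm a + real n) * norm (t n)"
      using norm_triangle_ineq[of a "of_nat n"] by (intro mult_right_mono) auto
    finally have "norm (t (Suc n)) * ((real n - norm b) * (real n + 1)) \<le> (norm a + real n) * norm (t n)" .
    moreover have "(real n - norm b) * (real n + 1) > 0"
      using large by simp
    ultimately have bound: "norm (t (Suc n)) \<le> (norm a + real n) / ((real n - norm b) * (real n + 1)) * norm (t n)"
      by (simp add: pos_le_divide_eq mult_ac)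
    have "norm (t (Suc n) * x ^ Suc n)
        \<le> (norm a + real n) * norm x / ((real n - norm b) * (real n + 1)) * norm (t n * x ^ n)"
      using mult_right_mono[OF bound, of "norm x ^ Suc n"] by (simp add: norm_mult norm_power mult_ac)
    also have "\<dots> \<le> 1/2 * norm (t n * x ^ n)"
      using ratio by (intro mult_right_mono) auto
    finally show "norm (norm (t (Suc n) * x ^ Suc n)) \<le> 1/2 * norm (norm (t n * x ^ n))"
      by simp
  qed simp
qed

definition kummer_coeff :: "complex \<Rightarrow> complex \<Rightarrow> nat \<Rightarrow> complex" where
  "kummer_coeff a b n = pochhammer a n / (pochhammer b n * fact n)"

lemma kummer_coeff_Suc:
  assumes "b \<notin> \<int>\<^sub>\<le>\<^sub>0"
  shows "kummer_coeff a b (Suc n) * ((b + of_nat n) * of_nat (Suc n)) = (a + of_nat n) * kummer_coeff a b n"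
proof -
  have "pochhammer b (Suc n) \<noteq> 0"
    using assms by (auto simp: pochhammer_eq_0_iff)
  then have "b + of_nat n \<noteq> 0" "pochhammer b n \<noteq> 0"
    by (simp_all add: pochhammer_rec')
  then show ?thesis
    unfolding kummer_coeff_def pochhammer_rec' fact_Suc
    by (simp add: divide_simps del: of_nat_Suc)
qed

lemma summable_norm_kummer_powser:
  "b \<notin> \<int>\<^sub>\<le>\<^sub>0 \<Longrightarrow> summable (\<lambda>n. norm (kummer_coeff a b n * x ^ n))"
  by (rule summable_norm_powser_ratio_recurrence) (rule kummer_coeff_Suc)

lemma add_of_nat_notin_nonpos_Ints:
  fixes b :: complex
  assumes "b \<notin> \<int>\<^sub>\<le>\<^sub>0"
  shows "b + of_nat n \<notin> \<int>\<^sub>\<le>\<^sub>0" and "b + of_nat n \<noteq> 0"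
proof -
  show "b + of_nat n \<notin> \<int>\<^sub>\<le>\<^sub>0"
    using assms nonpos_Ints_diff_Nats[of "b + of_nat n" "of_nat n"] by auto
  then show "b + of_nat n \<noteq> 0"
    by auto
qed

lemma pochhammer_shift_ratio:
  fixes b :: complex
  assumes "b \<notin> \<int>\<^sub>\<le>\<^sub>0"
  shows "pochhammer b n / pochhammer (b + 1) n = b / (b + of_nat n)"
proof -
  have "b + 1 \<notin> \<int>\<^sub>\<le>\<^sub>0"
    using add_of_nat_notin_nonpos_Ints(1)[OF assms, of 1] by simp
  then have "pochhammer (b + 1) n \<noteq> 0"
    by (auto simp: pochhammer_eq_0_iff)
  moreover have "b + of_nat n \<noteq> 0"
    by (rule add_of_nat_notin_nonpos_Ints(2)[OF assms])
  moreover have "(b + of_nat n) * pochhammer b n = b * pochhammer (b + 1) n"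
    using pochhammer_rec[of b n] pochhammer_rec'[of b n] by simp
  ultimately show ?thesis
    by (simp add: field_simps)
qed

lemma Bseq_inverse_add_of_nat:
  fixes b :: "'a::real_normed_field"
  shows "Bseq (\<lambda>n. inverse (b + of_nat n))"
proof -
  have "(\<lambda>n. inverse (b + of_nat n)) \<longlonglongrightarrow> 0"
    by (intro filterlim_compose[OF tendsto_inverse_0]
          tendsto_add_filterlim_at_infinity[OF tendsto_const] tendsto_of_nat)
  then show ?thesis
    by (intro convergent_imp_Bseq convergentI)
qed

lemma summable_norm_mult_Bseq:
  fixes f g :: "nat \<Rightarrow> 'a::real_normed_algebra"
  assumes "summable (\<lambda>n. norm (f n))" "Bseq g"
  shows "summable (\<lambda>n. norm (f n * g n))"
proof -
  obtain K where K: "\<And>n. norm (g n) \<le> K"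
    using assms(2) by (meson BseqE)
  show ?thesis
  proof (rule summable_comparison_test'[OF summable_mult2[OF assms(1), of K]])
    show "norm (norm (f n * g n)) \<le> norm (f n) * K" for n
      using norm_mult_ineq[of "f n" "g n"] mult_left_mono[OF K[of n], of "norm (f n)"] by simp
  qed
qed

definition macrobert_coeff :: "complex \<Rightarrow> complex \<Rightarrow> nat \<Rightarrow> complex" where
  "macrobert_coeff a b n = Gamma a / Gamma b * kummer_coeff a b n"

lemma summable_norm_macrobert_powser:
  assumes "b \<notin> \<int>\<^sub>\<le>\<^sub>0"
  shows "summable (\<lambda>n. norm (macrobert_coeff a b n * x ^ n))"
proof -
  have "summable (\<lambda>n. norm (Gamma a / Gamma b) * norm (kummer_coeff a b n * x ^ n))"
    by (rule summable_mult) (rule summable_norm_kummer_powser[OF assms])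
  then show ?thesis
    by (simp only: macrobert_coeff_def mult.assoc norm_mult)
qed

lemma macrobert_coeff_Gamma:
  assumes "a \<notin> \<int>\<^sub>\<le>\<^sub>0" "b \<notin> \<int>\<^sub>\<le>\<^sub>0"
  shows "macrobert_coeff a b n = Gamma (a + of_nat n) / (fact n * Gamma (b + of_nat n))"
  using Gamma_nonzero[OF assms(1)] Gamma_nonzero[OF assms(2)]
  unfolding macrobert_coeff_def kummer_coeff_def pochhammer_Gamma[OF assms(1)] pochhammer_Gamma[OF assms(2)]
  by (simp add: field_simps)

lemma MacRobertE_1_1_sums:
  assumes "b \<notin> \<int>\<^sub>\<le>\<^sub>0"
  shows "(\<lambda>n. macrobert_coeff a b n * (- 1 / z) ^ n) sums MacRobertE [a] [b] z"
proof -
  have "(\<lambda>n. kummer_coeff a b n * (- 1 / z) ^ n) sums hypF [a] [b] (- 1 / z)"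
    using summable_norm_cancel[OF summable_norm_kummer_powser[OF assms]]
    unfolding hypF_def kummer_coeff_def by (simp add: summable_sums)
  from sums_mult[OF this, of "Gamma a / Gamma b"] show ?thesis
    unfolding MacRobertE_def macrobert_coeff_def by (simp add: mult.assoc)
qed

lemma MacRobertE_2_2_sums:
  assumes "b \<notin> \<int>\<^sub>\<le>\<^sub>0" "d \<notin> \<int>\<^sub>\<le>\<^sub>0"
  shows "(\<lambda>n. macrobert_coeff a d n * (- 1 / z) ^ n / (b + of_nat n)) sums MacRobertE [a, b] [d, b + 1] z"
proof -
  define y where "y = - 1 / z"
  define t where "t n = kummer_coeff a d n * y ^ n * inverse (b + of_nat n)" for n
  have "summable (\<lambda>n. norm (t n))"
    unfolding t_def
    by (rule summable_norm_mult_Bseq[OF summable_norm_kummer_powser[OF assms(2)] Bseq_inverse_add_of_nat])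
  then have t_sums: "t sums suminf t"
    by (rule summable_sums[OF summable_norm_cancel])
  have "prod_list (map (\<lambda>c. pochhammer c n) [a, b]) / prod_list (map (\<lambda>c. pochhammer c n) [d, b + 1])
      * y ^ n / fact n = b * t n" for n
  proof -
    have "prod_list (map (\<lambda>c. pochhammer c n) [a, b]) / prod_list (map (\<lambda>c. pochhammer c n) [d, b + 1])
        * y ^ n / fact n = kummer_coeff a d n * y ^ n * (pochhammer b n / pochhammer (b + 1) n)"
      unfolding kummer_coeff_def by (simp add: divide_inverse ac_simps)
    then show ?thesis
      unfolding t_def pochhammer_shift_ratio[OF assms(1)] by (simp add: divide_inverse mult_ac)
  qed
  then have "hypF [a, b] [d, b + 1] y = b * suminf t"
    unfolding hypF_def by (simp only: suminf_mult[OF sums_summable[OF t_sums]])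
  then have "MacRobertE [a, b] [d, b + 1] z = Gamma a * Gamma b / (Gamma d * Gamma (b + 1)) * b * suminf t"
    unfolding MacRobertE_def y_def by (simp add: mult.assoc)
  also have "Gamma a * Gamma b / (Gamma d * Gamma (b + 1)) * b = Gamma a / Gamma d"
    using Gamma_plus1[OF assms(1)] Gamma_nonzero[OF assms(1)] assms(1) by (auto simp: field_simps)
  finally have "(\<lambda>n. Gamma a / Gamma d * t n) sums MacRobertE [a, b] [d, b + 1] z"
    by (simp only: sums_mult[OF t_sums])
  moreover have "Gamma a / Gamma d * t n = macrobert_coeff a d n * (- 1 / z) ^ n / (b + of_nat n)" for n
    unfolding t_def y_def macrobert_coeff_def by (simp add: divide_inverse mult.assoc)
  ultimately show ?thesis
    by simp
qed

lemma abs_summable_on_product_bound: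
  fixes G :: "nat \<times> nat \<Rightarrow> 'a::real_normed_vector"
  assumes "summable A" "summable B" "\<And>i. A i \<ge> 0" "\<And>j. B j \<ge> 0"
    and "\<And>i j. norm (G (i, j)) \<le> A i * B j"
  shows "(\<lambda>p. norm (G p)) summable_on UNIV"
proof -
  have "(\<lambda>p. A (fst p) * B (snd p)) summable_on Sigma UNIV (\<lambda>_. UNIV)"
  proof (rule summable_on_SigmaI)
    show "((\<lambda>j. A (fst (i, j)) * B (snd (i, j))) has_sum (A i * suminf B)) UNIV" for i
      using sums_nonneg_imp_has_sum[OF sums_mult[OF summable_sums[OF assms(2)], of "A i"]] assms(3,4)
      by simp
    show "(\<lambda>i. A i * suminf B) summable_on UNIV"
      using summable_nonneg_imp_summable_on[OF summable_mult2[OF assms(1), of "suminf B"]]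
        assms(3) suminf_nonneg[OF assms(2,4)] by simp
  qed (use assms(3,4) in auto)
  then have "(\<lambda>p. A (fst p) * B (snd p)) summable_on UNIV"
    by simp
  then show ?thesis
    by (rule Infinite_Sum.abs_summable_on_comparison_test') (use assms(5) in auto)
qed

lemma sums_rows_and_diagonals:
  fixes G :: "nat \<times> nat \<Rightarrow> complex"
  assumes "(\<lambda>p. norm (G p)) summable_on UNIV"
  shows "(\<lambda>i. \<Sum>j. G (i, j)) sums infsum G UNIV"
    and "(\<lambda>n. \<Sum>i\<le>n. G (i, n - i)) sums infsum G UNIV"
proof -
  have G_summable: "G summable_on UNIV"
    using abs_summable_summable[OF assms] .
  then have G_has_sum: "(G has_sum infsum G UNIV) (Sigma UNIV (\<lambda>_. UNIV))"
    by simp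
  have rows: "((\<lambda>j. G (i, j)) has_sum (\<Sum>j. G (i, j))) UNIV" for i
  proof -
    have "G summable_on Pair i ` UNIV"
      by (rule summable_on_subset_banach[OF G_summable]) auto
    then have "(\<lambda>j. G (i, j)) summable_on UNIV"
      by (subst (asm) summable_on_reindex) (auto simp: o_def inj_on_def)
    then show ?thesis
      by (metis has_sum_infsum has_sum_imp_sums sums_unique)
  qed
  show "(\<lambda>i. \<Sum>j. G (i, j)) sums infsum G UNIV"
    by (rule has_sum_imp_sums[OF has_sum_Sigma'[OF G_has_sum rows]])
  have diagonal: "bij_betw (\<lambda>p. (snd p, fst p - snd p)) (Sigma UNIV (\<lambda>n::nat. {..n})) UNIV"
    by (rule bij_betw_byWitness[where f' = "\<lambda>p. (fst p + snd p, fst p)"]) auto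
  have "((\<lambda>p. G (snd p, fst p - snd p)) has_sum infsum G UNIV) (Sigma UNIV (\<lambda>n. {..n}))"
    using has_sum_reindex_bij_betw[OF diagonal, of G] G_summable by (simp add: o_def)
  then show "(\<lambda>n. \<Sum>i\<le>n. G (i, n - i)) sums infsum G UNIV"
    by (rule has_sum_imp_sums[OF has_sum_Sigma']) auto
qed

lemma powser_weighted_Cauchy_product:
  fixes c e w :: "nat \<Rightarrow> complex"
  assumes c: "summable (\<lambda>n. norm (c n * x ^ n))" and e: "summable (\<lambda>n. norm (e n * x ^ n))"
    and w: "Bseq w"
  obtains S where "(\<lambda>i. \<Sum>j. c i * e j * w (i + j) * x ^ (i + j)) sums S"
    and "(\<lambda>n. (\<Sum>i\<le>n. c i * e (n - i)) * w n * x ^ n) sums S"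
proof -
  obtain K where K: "\<And>n. norm (w n) \<le> K"
    using w by (meson BseqE)
  then have "K \<ge> 0"
    using norm_ge_zero order_trans by blast
  define G where "G p = c (fst p) * e (snd p) * w (fst p + snd p) * x ^ (fst p + snd p)" for p
  have G_abs: "(\<lambda>p. norm (G p)) summable_on UNIV"
  proof (rule abs_summable_on_product_bound)
    show "summable (\<lambda>i. K * norm (c i * x ^ i))"
      using c by (rule summable_mult)
    show "norm (G (i, j)) \<le> K * norm (c i * x ^ i) * norm (e j * x ^ j)" for i j
    proof -
      have "norm (G (i, j)) = norm (w (i + j)) * (norm (c i * x ^ i) * norm (e j * x ^ j))"
        by (simp add: G_def norm_mult norm_power power_add mult_ac)
      also have "\<dots> \<le> K * (norm (c i * x ^ i) * norm (e j * x ^ j))"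
        using K by (intro mult_right_mono) auto
      finally show ?thesis
        by (simp add: mult.assoc)
    qed
  qed (use e \<open>K \<ge> 0\<close> in auto)
  have rows: "G (i, j) = c i * e j * w (i + j) * x ^ (i + j)" for i j
    by (simp add: G_def)
  have diagonal: "(\<Sum>i\<le>n. G (i, n - i)) = (\<Sum>i\<le>n. c i * e (n - i)) * w n * x ^ n" for n
    unfolding G_def sum_distrib_right by (intro sum.cong) auto
  show thesis
  proof (rule that)
    show "(\<lambda>i. \<Sum>j. c i * e j * w (i + j) * x ^ (i + j)) sums infsum G UNIV"
      using sums_rows_and_diagonals(1)[OF G_abs] by (simp only: rows)
    show "(\<lambda>n. (\<Sum>i\<le>n. c i * e (n - i)) * w n * x ^ n) sums infsum G UNIV"
      using sums_rows_and_diagonals(2)[OF G_abs] by (simp only: diagonal)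
  qed
qed

lemma powser_inverse_Euler_operator:
  fixes a :: "nat \<Rightarrow> complex" and f :: "complex \<Rightarrow> complex"
  assumes f: "\<And>w. w \<noteq> 0 \<Longrightarrow> (\<lambda>n. a n * inverse w ^ n) sums f w" and z: "z \<noteq> 0"
  shows "f field_differentiable (at z)"
    and "(\<lambda>n. of_nat n * a n * inverse z ^ n) sums (- z * deriv f z)"
proof -
  have summable: "summable (\<lambda>n. a n * u ^ n)" for u
  proof (cases "u = 0")
    case False
    then show ?thesis
      using sums_summable[OF f[of "inverse u"]] by simp
  qed simp
  have f_eq: "f w = (\<Sum>n. a n * inverse w ^ n)" if "w \<noteq> 0" for w
    using f[OF that] by (simp add: sums_iff)
  define u where "u = inverse z"
  define D where "D = (\<Sum>n. diffs a n * u ^ n)"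
  have "((\<lambda>u. \<Sum>n. a n * u ^ n) has_field_derivative D) (at u)"
    unfolding D_def by (rule termdiffs_strong_converges_everywhere[OF summable])
  then have "((\<lambda>w. \<Sum>n. a n * inverse w ^ n) has_field_derivative D * - (inverse z ^ Suc (Suc 0))) (at z)"
    unfolding u_def by (rule DERIV_chain2[OF _ DERIV_inverse[OF z]])
  then have deriv_f: "(f has_field_derivative D * - (inverse z ^ Suc (Suc 0))) (at z)"
    by (rule has_field_derivative_transform_within_open[of _ _ _ "- {0}"]) (use z f_eq in auto)
  then show "f field_differentiable (at z)"
    using field_differentiable_def by blast
  have "(\<lambda>n. diffs a n * u ^ n) sums D"
    unfolding D_def by (rule summable_sums[OF termdiff_converges_all[OF summable]])
  from sums_mult[OF this, of u]
  have "(\<lambda>n. of_nat (Suc n) * a (Suc n) * u ^ Suc n) sums (u * D)"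
    by (simp add: diffs_def mult_ac)
  then have "(\<lambda>n. of_nat n * a n * u ^ n) sums (u * D)"
    using sums_Suc_iff[of "\<lambda>n. of_nat n * a n * u ^ n"] by simp
  moreover have "- z * deriv f z = u * D"
    using DERIV_imp_deriv[OF deriv_f] z by (simp add: u_def field_simps power2_eq_square)
  ultimately show "(\<lambda>n. of_nat n * a n * inverse z ^ n) sums (- z * deriv f z)"
    by (simp add: u_def)
qed

definition fE_coeff :: "complex \<Rightarrow> complex \<Rightarrow> complex \<Rightarrow> complex \<Rightarrow> nat \<Rightarrow> complex" where
  "fE_coeff \<alpha> \<beta> \<gamma> \<delta> n = (\<Sum>i\<le>n. macrobert_coeff (\<alpha> + \<gamma>) \<beta> i
      * (macrobert_coeff (\<alpha> + 1) \<delta> (n - i) * (- 1) ^ (n - i))) / (\<beta> + of_nat n)"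

lemma power_minus_one_over: "(- 1 / z) ^ n = (- 1) ^ n * inverse z ^ n"
  for z :: complex
  by (simp add: power_minus[of "inverse z"] divide_inverse)

lemma fE_sums_powser:
  assumes "\<alpha> + \<gamma> \<notin> \<int>\<^sub>\<le>\<^sub>0" "\<beta> \<notin> \<int>\<^sub>\<le>\<^sub>0" "\<delta> \<notin> \<int>\<^sub>\<le>\<^sub>0" "z \<noteq> 0"
  shows "(\<lambda>n. fE_coeff \<alpha> \<beta> \<gamma> \<delta> n * inverse z ^ n) sums fE \<alpha> \<beta> \<gamma> \<delta> z"
proof -
  define c where "c = macrobert_coeff (\<alpha> + \<gamma>) \<beta>"
  define e where "e j = macrobert_coeff (\<alpha> + 1) \<delta> j * (- 1) ^ j" for j
  have "summable (\<lambda>n. norm (e n * inverse z ^ n))"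
    using summable_norm_macrobert_powser[OF assms(3), of "\<alpha> + 1" "- 1 / z"]
    unfolding power_minus_one_over by (simp add: e_def mult.assoc)
  then obtain S where rows: "(\<lambda>i. \<Sum>j. c i * e j * inverse (\<beta> + of_nat (i + j)) * inverse z ^ (i + j)) sums S"
    and diagonal: "(\<lambda>n. (\<Sum>i\<le>n. c i * e (n - i)) * inverse (\<beta> + of_nat n) * inverse z ^ n) sums S"
    using powser_weighted_Cauchy_product[OF summable_norm_macrobert_powser[OF assms(2)]
        _ Bseq_inverse_add_of_nat]
    unfolding c_def by blast
  have "(\<lambda>j. c i * e j * inverse (\<beta> + of_nat (i + j)) * inverse z ^ (i + j)) sums
      (z powi (- int i) * Gamma (\<alpha> + \<gamma> + of_nat i) / (fact i * Gamma (\<beta> + of_nat i))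
        * MacRobertE [\<alpha> + 1, \<beta> + of_nat i] [\<delta>, \<beta> + 1 + of_nat i] z)" for i
  proof -
    from sums_mult[OF MacRobertE_2_2_sums[OF add_of_nat_notin_nonpos_Ints(1)[OF assms(2)] assms(3), of "\<alpha> + 1" z], of "c i * inverse z ^ i"]
    have "(\<lambda>j. c i * inverse z ^ i * (macrobert_coeff (\<alpha> + 1) \<delta> j * (- 1 / z) ^ j
        / (\<beta> + of_nat i + of_nat j))) sums (c i * inverse z ^ i
          * MacRobertE [\<alpha> + 1, \<beta> + of_nat i] [\<delta>, \<beta> + of_nat i + 1] z)" .
    moreover have "c i * inverse z ^ i * (macrobert_coeff (\<alpha> + 1) \<delta> j * (- 1 / z) ^ j
        / (\<beta> + of_nat i + of_nat j)) = c i * e j * inverse (\<beta> + of_nat (i + j)) * inverse z ^ (i + j)" for j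
      unfolding power_minus_one_over by (simp add: e_def power_add divide_inverse add_ac mult_ac)
    moreover have "c i * inverse z ^ i = z powi (- int i) * Gamma (\<alpha> + \<gamma> + of_nat i) / (fact i * Gamma (\<beta> + of_nat i))"
      using macrobert_coeff_Gamma[OF assms(1,2), of i]
      by (simp add: c_def power_int_minus power_inverse mult.commute)
    ultimately show ?thesis
      by (simp add: add_ac)
  qed
  then have "fE \<alpha> \<beta> \<gamma> \<delta> z = S"
    unfolding fE_def using rows by (simp add: sums_iff)
  with diagonal show ?thesis
    by (simp add: fE_coeff_def c_def e_def divide_inverse)
qed

lemma fE_coeff_Euler_sums:
  assumes "\<beta> \<notin> \<int>\<^sub>\<le>\<^sub>0" "\<delta> \<notin> \<int>\<^sub>\<le>\<^sub>0" "z \<noteq> 0"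
  shows "(\<lambda>n. (\<beta> + of_nat n) * fE_coeff \<alpha> \<beta> \<gamma> \<delta> n * inverse z ^ n) sums
      (MacRobertE [\<alpha> + 1] [\<delta>] z * MacRobertE [\<alpha> + \<gamma>] [\<beta>] (- z))"
proof -
  define c where "c i = macrobert_coeff (\<alpha> + \<gamma>) \<beta> i * inverse z ^ i" for i
  define e where "e j = macrobert_coeff (\<alpha> + 1) \<delta> j * (- 1 / z) ^ j" for j
  have "(\<lambda>n. \<Sum>i\<le>n. c i * e (n - i)) sums (suminf c * suminf e)"
    unfolding c_def e_def
    by (rule Cauchy_product_sums; rule summable_norm_macrobert_powser, rule assms)
  moreover have "suminf c = MacRobertE [\<alpha> + \<gamma>] [\<beta>] (- z)"
    using sums_unique[OF MacRobertE_1_1_sums[OF assms(1), of "\<alpha> + \<gamma>" "- z"]]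
    unfolding c_def by (simp add: inverse_eq_divide)
  moreover have "suminf e = MacRobertE [\<alpha> + 1] [\<delta>] z"
    unfolding e_def by (rule sums_unique[OF MacRobertE_1_1_sums[OF assms(2)], symmetric])
  moreover have "(\<Sum>i\<le>n. c i * e (n - i)) = (\<beta> + of_nat n) * fE_coeff \<alpha> \<beta> \<gamma> \<delta> n * inverse z ^ n" for n
  proof -
    have "c i * e (n - i) = macrobert_coeff (\<alpha> + \<gamma>) \<beta> i
        * (macrobert_coeff (\<alpha> + 1) \<delta> (n - i) * (- 1) ^ (n - i)) * inverse z ^ n" if "i \<le> n" for i
    proof -
      have "c i * e (n - i) = macrobert_coeff (\<alpha> + \<gamma>) \<beta> i
          * (macrobert_coeff (\<alpha> + 1) \<delta> (n - i) * (- 1) ^ (n - i)) * (inverse z ^ i * inverse z ^ (n - i))"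
        unfolding c_def e_def power_minus_one_over by (simp add: mult_ac)
      with that show ?thesis
        by (simp flip: power_add)
    qed
    then have "(\<Sum>i\<le>n. c i * e (n - i)) = (\<Sum>i\<le>n. macrobert_coeff (\<alpha> + \<gamma>) \<beta> i
        * (macrobert_coeff (\<alpha> + 1) \<delta> (n - i) * (- 1) ^ (n - i))) * inverse z ^ n"
      unfolding sum_distrib_right by (intro sum.cong) auto
    then show ?thesis
      using add_of_nat_notin_nonpos_Ints(2)[OF assms(1)] by (simp add: fE_coeff_def)
  qed
  ultimately show ?thesis
    by (simp add: mult.commute)
qed

theorem mainTheorem1:
  fixes \<alpha> \<beta> \<gamma> \<delta> z :: complex
  assumes "\<alpha> + 1 \<notin> \<int>\<^sub>\<le>\<^sub>0"
    and "\<And>n::nat. \<alpha> + \<gamma> + of_nat n \<notin> \<int>\<^sub>\<le>\<^sub>0"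
    and "\<And>n::nat. \<beta> + of_nat n \<notin> \<int>\<^sub>\<le>\<^sub>0"
    and "\<delta> \<notin> \<int>\<^sub>\<le>\<^sub>0"
    and "z \<noteq> 0"
  shows "(fE \<alpha> \<beta> \<gamma> \<delta>) field_differentiable (at z)
    \<and> - z * deriv (fE \<alpha> \<beta> \<gamma> \<delta>) z + \<beta> * fE \<alpha> \<beta> \<gamma> \<delta> z
      = MacRobertE [\<alpha> + 1] [\<delta>] z * MacRobertE [\<alpha> + \<gamma>] [\<beta>] (- z)"
proof -
  have \<alpha>\<gamma>: "\<alpha> + \<gamma> \<notin> \<int>\<^sub>\<le>\<^sub>0" and \<beta>: "\<beta> \<notin> \<int>\<^sub>\<le>\<^sub>0"
    using assms(2,3)[of 0] by simp_all
  note powser = fE_sums_powser[OF \<alpha>\<gamma> \<beta> assms(4)]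
  note Euler = powser_inverse_Euler_operator[OF powser assms(5)]
  have "(\<lambda>n. of_nat n * fE_coeff \<alpha> \<beta> \<gamma> \<delta> n * inverse z ^ n
        + \<beta> * (fE_coeff \<alpha> \<beta> \<gamma> \<delta> n * inverse z ^ n))
      sums (- z * deriv (fE \<alpha> \<beta> \<gamma> \<delta>) z + \<beta> * fE \<alpha> \<beta> \<gamma> \<delta> z)"
    by (rule sums_add[OF Euler(2) sums_mult[OF powser[OF assms(5)]]])
  moreover have "of_nat n * fE_coeff \<alpha> \<beta> \<gamma> \<delta> n * inverse z ^ n
        + \<beta> * (fE_coeff \<alpha> \<beta> \<gamma> \<delta> n * inverse z ^ n)
      = (\<beta> + of_nat n) * fE_coeff \<alpha> \<beta> \<gamma> \<delta> n * inverse z ^ n" for n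
    by (simp add: algebra_simps)
  ultimately have "- z * deriv (fE \<alpha> \<beta> \<gamma> \<delta>) z + \<beta> * fE \<alpha> \<beta> \<gamma> \<delta> z
      = MacRobertE [\<alpha> + 1] [\<delta>] z * MacRobertE [\<alpha> + \<gamma>] [\<beta>] (- z)"
    using fE_coeff_Euler_sums[OF \<beta> assms(4,5)] by (simp add: sums_unique2)
  with Euler(1) show ?thesis
    by blast
qed

end
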